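(* Let $d\in\mathbb{N}$, $\mathbf{s}=(s_1,\dots,s_d)\in\mathbb{N}^d$ and $y\in(-\pi/2,\pi/2)$. Let $l_1(n)\in\{2n,2n+1,2n-1\}$ and $l_2(n),\dots,l_d(n)\in\{2n,2n+1\}$. Then for every integer $n\ge0$, \[ \sum_{n_1>\cdots>n_d>n}\frac{a_{n_1}(\sin y)}{l_1(n_1)^{s_1}\cdots l_d(n_d)^{s_d}}=\int_0^y\lambda_{l_1,s_1}\circ\cdots\circ\lambda_{l_d,s_d}\circ\overleftarrow{a_n(\sin t)} , \] and for every $x\in(-1,1)$, \[ \sum_{n_1>\cdots>n_d>n}\frac{a_{n_1}(x)}{l_1(n_1)^{s_1}\cdots l_d(n_d)^{s_d}}=\int_0^x\Lambda_{l_1,s_1}\circ\cdots\circ\Lambda_{l_d,s_d}\circ\overleftarrow{a_n(t)} , \] where $\Lambda_{l,s}$ is obtained from $\lambda_{l,s}$ by the substitution $t\to\sin^{-1}t$.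
   Context: $\mathbb{N}=\{1,2,\dots\}$. Set $a_0(x)=1$, $a_n(x)=\frac{1}{4^n}\binom{2n}{n}x^{2n}$ for $n\ge1$. Iterated integrals: $\int_0^y f_1(t)dt\circ\cdots\circ f_r(t)dt:=\int_{y>t_1>\cdots>t_r>0}f_1(t_1)\cdots f_r(t_r)dt_1\cdots dt_r$; juxtaposition of 1-forms means $\circ$; $(\omega)^k$ is $\omega$ repeated $k$ times ($k=0$: empty); expressions are expanded by linearity (e.g. $\omega\circ(\alpha-\beta\circ\gamma)=\omega\circ\alpha-\omega\circ\beta\circ\gamma$). $d(\sec t)=\sec t\tan t\,dt$. For a function $F$: $f_1(t)dt\circ\overleftarrow{F(t)}\circ f_2(t)dt:=F(t)f_1(t)dt\circ f_2(t)dt$ (and likewise when $\overleftarrow{F}$ stands at the end: it multiplies the preceding 1-form), while $\int_0^y\overleftarrow{F(t)}\circ f_1(t)dt\circ\cdots\circ f_r(t)dt:=F(y)\int_0^y f_1(t)dt\circ\cdots\circ f_r(t)dt$. With $F_s=(\cot t\,dt)^{s-1}$ define $\lambda_{2n,s}(t)=F_s\,(\tan t\,dt-\csc t\,dt\ d(\sec t))$, $\lambda_{2n+1,s}(t)=\overleftarrow{\csc t}\circ F_s\,(\sin t\tan t\,dt-dt\ d(\sec t))$, $\lambda_{2n-1,1}(t)=\overleftarrow{\cos t}\circ\tan t\sec t\,dt$, $\lambda_{2n-1,s}(t)=\overleftarrow{\sin t}\circ F_{s-1}\,\frac{dt}{\tan^2 t}\,\tan t\sec t\,dt$ for $s\ge2$.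 The substitution $t\to\sin^{-1}t$ replaces each function $F(t)$ by $F(\sin^{-1}t)$ and each 1-form $f(t)dt$ by $f(\sin^{-1}t)\,dt/\sqrt{1-t^2}$. *)

theory Defs
  imports "HOL-Analysis.Analysis"
begin

definition a_coef :: "nat \<Rightarrow> real \<Rightarrow> real" where
  "a_coef n x = (if n = 0 then 1 else (real ((2*n) choose n) / 4^n) * x^(2*n))"

definition oint :: "real \<Rightarrow> real \<Rightarrow> (real \<Rightarrow> real) \<Rightarrow> real" where
  "oint a b f = (if a \<le> b then integral {a..b} f else - integral {b..a} f)"

text \<open>Semantics of words of 1-forms and left-arrow functions, as operators acting on the
  value g of the remaining (inner) part of the iterated integral:
  a 1-form f(t)dt followed by a word w with value g gives  y \<mapsto> \<integral>_0^y f(t) g(t) dt;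
  a function marker F followed by w gives y \<mapsto> F(y) g(y).
  Hence \<integral>_0^y w = word value applied to the constant 1 at y, and juxtaposition is
  composition of operators.\<close>
definition form_op :: "(real \<Rightarrow> real) \<Rightarrow> (real \<Rightarrow> real) \<Rightarrow> real \<Rightarrow> real" where
  "form_op f g = (\<lambda>y. oint 0 y (\<lambda>t. f t * g t))"

definition fun_op :: "(real \<Rightarrow> real) \<Rightarrow> (real \<Rightarrow> real) \<Rightarrow> real \<Rightarrow> real" where
  "fun_op F g = (\<lambda>y. F y * g y)"

definition sec_f :: "real \<Rightarrow> real" where "sec_f t = 1 / cos t"
definition csc_f :: "real \<Rightarrow> real" where "csc_f t = 1 / sin t"

datatype lkind = L_even | L_odd | L_oddm

definition l_val :: "lkind \<Rightarrow> nat \<Rightarrow> real" where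
  "l_val k m = (case k of L_even \<Rightarrow> 2 * real m | L_odd \<Rightarrow> 2 * real m + 1
                        | L_oddm \<Rightarrow> 2 * real m - 1)"

text \<open>lambda_{l,s}, generic in a transformation P of 1-form coefficients and Q of function
  markers (identity for lambda, the substitution t -> arcsin t for Lambda).\<close>
definition lam_gen :: "((real \<Rightarrow> real) \<Rightarrow> real \<Rightarrow> real) \<Rightarrow> ((real \<Rightarrow> real) \<Rightarrow> real \<Rightarrow> real)
    \<Rightarrow> lkind \<Rightarrow> nat \<Rightarrow> (real \<Rightarrow> real) \<Rightarrow> real \<Rightarrow> real" where
  "lam_gen P Q k s g =
    (let Fo = (\<lambda>f. form_op (P f)); Fu = (\<lambda>F. fun_op (Q F));
         dsec = (\<lambda>t. sec_f t * tan t)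
     in case k of
       L_even \<Rightarrow> (Fo cot ^^ (s - 1))
                  (\<lambda>y. Fo tan g y - Fo csc_f (Fo dsec g) y)
     | L_odd \<Rightarrow> Fu csc_f ((Fo cot ^^ (s - 1))
                  (\<lambda>y. Fo (\<lambda>t. sin t * tan t) g y - Fo (\<lambda>t. 1) (Fo dsec g) y))
     | L_oddm \<Rightarrow> (if s = 1 then Fu cos (Fo (\<lambda>t. tan t * sec_f t) g)
                  else Fu sin ((Fo cot ^^ (s - 2))
                         (Fo (\<lambda>t. 1 / (tan t)^2) (Fo (\<lambda>t. tan t * sec_f t) g)))))"

definition lam :: "lkind \<Rightarrow> nat \<Rightarrow> (real \<Rightarrow> real) \<Rightarrow> real \<Rightarrow> real" where
  "lam = lam_gen id id"

text \<open>Substitution t -> arcsin t: f(t)dt becomes f(arcsin t) dt / sqrt(1-t^2), F(t) becomes F(arcsin t).\<close>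
definition Lam :: "lkind \<Rightarrow> nat \<Rightarrow> (real \<Rightarrow> real) \<Rightarrow> real \<Rightarrow> real" where
  "Lam = lam_gen (\<lambda>f t. f (arcsin t) / sqrt (1 - t^2)) (\<lambda>F t. F (arcsin t))"

text \<open>Composition L_{l_1,s_1} o ... o L_{l_d,s_d} o (left-arrow h), as operator applied to h.\<close>
definition word_val :: "(lkind \<Rightarrow> nat \<Rightarrow> (real \<Rightarrow> real) \<Rightarrow> real \<Rightarrow> real)
    \<Rightarrow> lkind list \<Rightarrow> nat list \<Rightarrow> (real \<Rightarrow> real) \<Rightarrow> real \<Rightarrow> real" where
  "word_val L ks ss h = foldr (\<lambda>(k, s) g. L k s g) (zip ks ss) h"

definition dec_tuples :: "nat \<Rightarrow> nat \<Rightarrow> nat list set" where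
  "dec_tuples d n = {ns. length ns = d \<and> sorted_wrt (>) ns \<and> (\<forall>m\<in>set ns. n < m)}"

definition summand :: "lkind list \<Rightarrow> nat list \<Rightarrow> real \<Rightarrow> nat list \<Rightarrow> real" where
  "summand ks ss x ns = a_coef (hd ns) x / (\<Prod>i<length ks. l_val (ks ! i) (ns ! i) ^ (ss ! i))"

end

theory Submission
  imports Defs
begin

text \<open>
  For a coefficient sequence c of radius of convergence at least 1 let A c x = \<Sum>k. c_k a_k(x)
  (a_series c x below). The recurrence 2(k+1) a_(k+1)(x) = (2k+1) x^2 a_k(x) gives
  d/dt A c (sin t) = cot t * A c' (sin t) with c'_k = 2k c_k. With it, every iterated integral
  in \<lambda>_(l,s) is evaluated by an explicit antiderivative vanishing at 0, and \<lambda>_(l,s) maps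
  A c (sin t) to A c'' (sin t) with c''_m = (\<Sum>k<m. c_k) / l(m)^s. Starting from a_n = A \<delta>_n,
  a word of length d produces the series whose m-th coefficient is the sum of
  1 / (l_1(n_1)^s_1 \<cdots> l_d(n_d)^s_d) over m = n_1 > \<cdots> > n_d > n; grouping the nonnegative
  multiple sum by n_1 gives the first identity. The second one is the same computation after the
  substitution t = arcsin x, so both are proved at once for an abstract change of variables.
\<close>

section \<open>Central binomial coefficients\<close>

lemma central_binomial_Suc:
  "((2 * Suc k) choose Suc k) * Suc k = 2 * (2 * k + 1) * ((2 * k) choose k)"
proof -
  have sym: "Suc (2 * k) choose Suc k = Suc (2 * k) choose k"
    using binomial_symmetric[of k "Suc (2 * k)"] by (simp add: Suc_diff_le)
  have "((2 * Suc k) choose Suc k) * Suc k = Suc (Suc (2 * k)) * (Suc (2 * k) choose k)"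
    using Suc_times_binomial_eq[of "Suc (2 * k)" k] by (simp del: binomial_Suc_Suc)
  also have "\<dots> = 2 * ((Suc (2 * k) choose Suc k) * Suc k)"
    by (simp only: sym) (simp del: binomial_Suc_Suc)
  also have "(Suc (2 * k) choose Suc k) * Suc k = (2 * k + 1) * ((2 * k) choose k)"
    using Suc_times_binomial_eq[of "2 * k" k] by (simp del: binomial_Suc_Suc)
  finally show ?thesis by simp
qed

lemma a_coef_altdef: "a_coef k x = real ((2 * k) choose k) / 4 ^ k * x ^ (2 * k)"
  by (simp add: a_coef_def)

lemma a_coef_power: "a_coef k x = a_coef k 1 * (x\<^sup>2) ^ k"
  by (simp add: a_coef_altdef power_mult)

lemma a_coef_Suc: "2 * real (Suc k) * a_coef (Suc k) x = (2 * real k + 1) * x\<^sup>2 * a_coef k x"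
proof -
  define B C where "B = real ((2 * k) choose k)" and "C = real ((2 * Suc k) choose Suc k)"
  have C: "C * real (Suc k) = 2 * (2 * real k + 1) * B"
    unfolding B_def C_def using arg_cong[OF central_binomial_Suc[of k], of real]
    by (simp only: of_nat_mult of_nat_Suc of_nat_add of_nat_numeral of_nat_1)
  have pow: "x ^ (2 * Suc k) = x\<^sup>2 * x ^ (2 * k)" "(4::real) ^ Suc k = 4 * 4 ^ k"
    by (simp_all only: mult_Suc_right power_add power_Suc)
  have "2 * real (Suc k) * a_coef (Suc k) x
      = 2 * (C * real (Suc k)) / (4 * 4 ^ k) * (x\<^sup>2 * x ^ (2 * k))"
    unfolding a_coef_altdef C_def[symmetric] pow by (simp add: field_simps)
  also have "\<dots> = (2 * real k + 1) * x\<^sup>2 * (B / 4 ^ k * x ^ (2 * k))"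
    unfolding C by (simp add: field_simps)
  also have "\<dots> = (2 * real k + 1) * x\<^sup>2 * a_coef k x"
    unfolding a_coef_altdef B_def ..
  finally show ?thesis .
qed

lemma a_coef_nonneg: "0 \<le> a_coef k x"
  by (simp add: a_coef_power[of k x] a_coef_altdef)

lemma a_coef_one_le_1: "a_coef k 1 \<le> 1"
proof -
  have "(2 * k) choose k \<le> 4 ^ k"
    using binomial_le_pow2[of "2 * k" k] by (simp add: power_mult)
  then have "real ((2 * k) choose k) \<le> 4 ^ k"
    by (metis of_nat_le_iff of_nat_numeral of_nat_power)
  then show ?thesis
    by (simp add: a_coef_altdef)
qed

section \<open>Radius of convergence\<close>

lemma conv_radius_mono:
  fixes f g :: "nat \<Rightarrow> 'a :: {banach, real_normed_div_algebra}"
  assumes "\<And>n. norm (f n) \<le> norm (g n)"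
  shows "conv_radius g \<le> conv_radius f"
proof (rule conv_radius_geI_ex')
  fix r :: real
  assume "0 < r" "ereal r < conv_radius g"
  then have "summable (\<lambda>n. norm (g n * of_real r ^ n))"
    by (intro abs_summable_in_conv_radius) simp
  then show "summable (\<lambda>n. f n * of_real r ^ n)"
    by (rule summable_comparison_test') (simp add: norm_mult mult_right_mono assms)
qed

lemma conv_radius_of_nat_mult:
  fixes f :: "nat \<Rightarrow> 'a :: {banach, real_normed_field}"
  shows "conv_radius f \<le> conv_radius (\<lambda>n. of_nat n * f n)"
proof -
  have "conv_radius f \<le> fps_conv_radius (fps_deriv (Abs_fps f))"
    using fps_conv_radius_deriv[of "Abs_fps f"] by (simp add: fps_conv_radius_def)
  also have "\<dots> = conv_radius (\<lambda>n. of_nat (n + 1) * f (n + 1))"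
    by (simp add: fps_conv_radius_def fps_deriv_def)
  also have "\<dots> = conv_radius (\<lambda>n. of_nat n * f n)"
    using conv_radius_shift[of "\<lambda>n. of_nat n * f n" 1] by simp
  finally show ?thesis .
qed

lemma conv_radius_partial_sums:
  fixes f :: "nat \<Rightarrow> 'a :: {banach, real_normed_div_algebra}"
  shows "min (conv_radius f) 1 \<le> conv_radius (\<lambda>n. \<Sum>k<n. f k)"
proof -
  have "conv_radius (\<lambda>_. 1 :: 'a) = 1"
    by (rule conv_radius_ratio_limit_nonzero[of _ 1]) simp_all
  then have "min (conv_radius f) 1 \<le> conv_radius (\<lambda>n. \<Sum>i\<le>n. f i * 1)"
    using conv_radius_mult_ge[of f "\<lambda>_. 1"] by simp
  also have "\<dots> = conv_radius (\<lambda>n. \<Sum>k<n + 1. f k)"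
    by (simp add: lessThan_Suc_atMost)
  also have "\<dots> = conv_radius (\<lambda>n. \<Sum>k<n. f k)"
    by (rule conv_radius_shift)
  finally show ?thesis .
qed

section \<open>Series in the coefficients \<open>a\<^sub>k\<close>\<close>

definition euler_coeffs :: "(nat \<Rightarrow> real) \<Rightarrow> nat \<Rightarrow> real" where
  "euler_coeffs c k = 2 * real k * c k"

definition deriv_coeffs :: "(nat \<Rightarrow> real) \<Rightarrow> nat \<Rightarrow> real" where
  "deriv_coeffs c k = (2 * real k + 1) * c (Suc k)"

lemma conv_radius_euler_coeffs: "conv_radius c \<le> conv_radius (euler_coeffs c)"
proof -
  have "conv_radius (euler_coeffs c) = conv_radius (\<lambda>k. real k * c k)"
    unfolding euler_coeffs_def using conv_radius_cmult_left[of 2 "\<lambda>k. real k * c k"]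
    by (simp add: mult.assoc)
  then show ?thesis
    using conv_radius_of_nat_mult[of c] by simp
qed

lemma conv_radius_deriv_coeffs: "conv_radius c \<le> conv_radius (deriv_coeffs c)"
proof -
  have "conv_radius c \<le> conv_radius (\<lambda>k. euler_coeffs c (k + 1))"
    using conv_radius_euler_coeffs[of c] conv_radius_shift[of "euler_coeffs c" 1] by simp
  also have "\<dots> \<le> conv_radius (deriv_coeffs c)"
    by (rule conv_radius_mono) (simp add: euler_coeffs_def deriv_coeffs_def abs_mult mult_right_mono)
  finally show ?thesis .
qed

definition a_series :: "(nat \<Rightarrow> real) \<Rightarrow> real \<Rightarrow> real" where
  "a_series c x = (\<Sum>k. c k * a_coef k x)"

lemma a_series_sums:
  assumes "1 \<le> conv_radius c" "\<bar>x\<bar> < 1"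
  shows "(\<lambda>k. c k * a_coef k x) sums a_series c x"
proof -
  have "conv_radius c \<le> conv_radius (\<lambda>k. c k * a_coef k 1)"
    by (rule conv_radius_mono) (simp add: abs_mult a_coef_nonneg a_coef_one_le_1 mult_left_le)
  moreover have "ereal (norm (x\<^sup>2)) < 1"
    using assms(2) by (simp add: abs_square_less_1)
  ultimately have "ereal (norm (x\<^sup>2)) < conv_radius (\<lambda>k. c k * a_coef k 1)"
    using assms(1) by (meson order_less_le_trans order_trans)
  then have "summable (\<lambda>k. c k * a_coef k 1 * (x\<^sup>2) ^ k)"
    by (rule summable_in_conv_radius)
  then show ?thesis
    unfolding a_series_def by (simp add: a_coef_power[of _ x] mult.assoc summable_sums)
qed

lemma a_series_add:
  assumes "1 \<le> conv_radius c" "1 \<le> conv_radius d" "\<bar>x\<bar> < 1"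
  shows "a_series (\<lambda>k. c k + d k) x = a_series c x + a_series d x"
  using sums_add[OF a_series_sums[OF assms(1,3)] a_series_sums[OF assms(2,3)]]
  by (simp add: a_series_def distrib_right sums_iff)

lemma a_series_diff:
  assumes "1 \<le> conv_radius c" "1 \<le> conv_radius d" "\<bar>x\<bar> < 1"
  shows "a_series (\<lambda>k. c k - d k) x = a_series c x - a_series d x"
  using sums_diff[OF a_series_sums[OF assms(1,3)] a_series_sums[OF assms(2,3)]]
  by (simp add: a_series_def left_diff_distrib sums_iff)

lemma a_series_at_0: "a_series c 0 = c 0"
proof -
  have "(\<lambda>k. c k * a_coef k 0) = (\<lambda>k. if k = 0 then c 0 else 0)"
    by (simp add: fun_eq_iff a_coef_def)
  then show ?thesis
    using sums_single[of 0 "\<lambda>_. c 0"] by (simp add: a_series_def sums_iff)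
qed

lemma a_series_euler_coeffs:
  assumes "1 \<le> conv_radius c" "\<bar>x\<bar> < 1"
  shows "a_series (euler_coeffs c) x = x\<^sup>2 * a_series (deriv_coeffs c) x"
proof -
  have "(\<lambda>k. euler_coeffs c k * a_coef k x) sums a_series (euler_coeffs c) x"
    using assms conv_radius_euler_coeffs[of c] by (intro a_series_sums) auto
  then have "(\<lambda>k. euler_coeffs c (Suc k) * a_coef (Suc k) x) sums a_series (euler_coeffs c) x"
    by (subst sums_Suc_iff) (simp add: euler_coeffs_def)
  moreover have "euler_coeffs c (Suc k) * a_coef (Suc k) x = x\<^sup>2 * (deriv_coeffs c k * a_coef k x)" for k
  proof -
    have "euler_coeffs c (Suc k) * a_coef (Suc k) x = c (Suc k) * (2 * real (Suc k) * a_coef (Suc k) x)"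
      by (simp only: euler_coeffs_def mult_ac)
    also have "\<dots> = x\<^sup>2 * (deriv_coeffs c k * a_coef k x)"
      unfolding a_coef_Suc by (simp only: deriv_coeffs_def mult_ac)
    finally show ?thesis .
  qed
  moreover have "(\<lambda>k. x\<^sup>2 * (deriv_coeffs c k * a_coef k x)) sums (x\<^sup>2 * a_series (deriv_coeffs c) x)"
    using assms conv_radius_deriv_coeffs[of c] by (intro sums_mult a_series_sums) auto
  ultimately show ?thesis
    by (simp add: sums_unique2)
qed

lemma has_real_derivative_a_series:
  assumes "1 \<le> conv_radius c" "\<bar>x\<bar> < 1"
  shows "(a_series c has_real_derivative x * a_series (deriv_coeffs c) x) (at x)"
proof -
  define q where "q k = c k * a_coef k 1" for k
  have "a_series c y = (\<Sum>k. q k * (y\<^sup>2) ^ k)" for y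
    by (simp add: a_series_def q_def a_coef_power[of _ y] mult.assoc)
  then have series: "a_series c = (\<lambda>y. \<Sum>k. q k * (y\<^sup>2) ^ k)" ..
  have "conv_radius c \<le> conv_radius q"
    unfolding q_def
    by (rule conv_radius_mono) (simp add: abs_mult a_coef_nonneg a_coef_one_le_1 mult_left_le)
  then have "summable (\<lambda>k. q k * z ^ k)" if "norm z < 1" for z :: real
    using assms(1) that by (intro summable_in_conv_radius) (meson ereal_less(3) order_less_le_trans order_trans)
  moreover have "norm (x\<^sup>2) < 1"
    using assms(2) by (simp add: abs_square_less_1)
  ultimately have "((\<lambda>z. \<Sum>k. q k * z ^ k) has_real_derivative (\<Sum>k. diffs q k * (x\<^sup>2) ^ k)) (at (x\<^sup>2))"
    by (intro termdiffs_strong'[of 1]) auto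
  from DERIV_chain2[OF this DERIV_pow[of 2 x]]
  have deriv: "(a_series c has_real_derivative (\<Sum>k. diffs q k * (x\<^sup>2) ^ k) * (2 * x)) (at x)"
    by (simp add: series)
  have "2 * (diffs q k * (x\<^sup>2) ^ k) = deriv_coeffs c k * a_coef k x" for k
  proof -
    have "2 * (diffs q k * (x\<^sup>2) ^ k) = c (Suc k) * (2 * real (Suc k) * a_coef (Suc k) 1) * (x\<^sup>2) ^ k"
      by (simp only: diffs_def q_def mult_ac)
    also have "\<dots> = deriv_coeffs c k * (a_coef k 1 * (x\<^sup>2) ^ k)"
      unfolding a_coef_Suc by (simp add: deriv_coeffs_def mult_ac)
    finally show ?thesis
      by (simp only: a_coef_power[of k x])
  qed
  then have terms: "diffs q k * (x\<^sup>2) ^ k = deriv_coeffs c k * a_coef k x / 2" for k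
    by (metis nonzero_mult_div_cancel_left zero_neq_numeral)
  have "1 \<le> conv_radius (deriv_coeffs c)"
    using assms(1) conv_radius_deriv_coeffs order_trans by blast
  then have "(\<lambda>k. diffs q k * (x\<^sup>2) ^ k) sums (a_series (deriv_coeffs c) x / 2)"
    unfolding terms using assms(2) by (intro sums_divide a_series_sums)
  then have "(\<Sum>k. diffs q k * (x\<^sup>2) ^ k) * (2 * x) = x * a_series (deriv_coeffs c) x"
    by (simp add: sums_iff)
  with deriv show ?thesis
    by simp
qed

lemma isCont_a_series: "1 \<le> conv_radius c \<Longrightarrow> \<bar>x\<bar> < 1 \<Longrightarrow> isCont (a_series c) x"
  using has_real_derivative_a_series by (rule DERIV_isCont)

lemma continuous_on_a_series_over_x:
  assumes "1 \<le> conv_radius c" "c 0 = 0"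
  shows "continuous_on {-1<..<1} (\<lambda>x. a_series c x / x)"
proof (rule continuous_at_imp_continuous_on, rule ballI)
  fix x :: real
  assume "x \<in> {-1<..<1}"
  then have x: "\<bar>x\<bar> < 1" by auto
  show "isCont (\<lambda>x. a_series c x / x) x"
  proof (cases "x = 0")
    case False
    then show ?thesis
      using isCont_a_series[OF assms(1) x] by (auto intro!: continuous_intros)
  next
    case True
    have "((\<lambda>y. (a_series c y - a_series c 0) / (y - 0)) \<longlongrightarrow> 0 * a_series (deriv_coeffs c) 0) (at 0)"
      using has_real_derivative_a_series[OF assms(1), of 0] by (simp add: has_field_derivative_iff)
    then show ?thesis
      using True assms(2) by (simp add: isCont_def a_series_at_0)
  qed
qed

definition arcsin_range :: "real set" where
  "arcsin_range = {-(pi / 2)<..<pi / 2}"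

lemma cos_gt_zero_arcsin_range: "t \<in> arcsin_range \<Longrightarrow> 0 < cos t"
  by (simp add: arcsin_range_def cos_gt_zero_pi)

lemma abs_sin_less_1_arcsin_range: "t \<in> arcsin_range \<Longrightarrow> \<bar>sin t\<bar> < 1"
proof -
  assume "t \<in> arcsin_range"
  then have "(sin t)\<^sup>2 < 1"
    using cos_gt_zero_arcsin_range[of t] sin_cos_squared_add[of t] by (smt (verit) zero_less_power)
  then show ?thesis
    by (simp add: abs_square_less_1)
qed

lemma sin_eq_0_arcsin_range: "t \<in> arcsin_range \<Longrightarrow> sin t = 0 \<longleftrightarrow> t = 0"
  using sin_eq_0_pi[of t] by (auto simp: arcsin_range_def)

lemma has_real_derivative_a_series_sin:
  assumes "1 \<le> conv_radius c" "t \<in> arcsin_range" "t \<noteq> 0"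
  shows "((\<lambda>t. a_series c (sin t)) has_real_derivative cot t * a_series (euler_coeffs c) (sin t)) (at t)"
proof -
  have s: "\<bar>sin t\<bar> < 1" "sin t \<noteq> 0"
    using assms(2,3) abs_sin_less_1_arcsin_range sin_eq_0_arcsin_range by auto
  have "((\<lambda>t. a_series c (sin t)) has_real_derivative
          sin t * a_series (deriv_coeffs c) (sin t) * cos t) (at t)"
    using DERIV_chain2[OF has_real_derivative_a_series[OF assms(1) s(1)] DERIV_sin] .
  moreover have "sin t * a_series (deriv_coeffs c) (sin t) * cos t = cot t * a_series (euler_coeffs c) (sin t)"
    using s by (simp add: a_series_euler_coeffs[OF assms(1) s(1)] cot_def power2_eq_square)
  ultimately show ?thesis
    by simp
qed

lemma continuous_on_a_series_sin:
  assumes "1 \<le> conv_radius c"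
  shows "continuous_on arcsin_range (\<lambda>t. a_series c (sin t))"
proof (rule continuous_at_imp_continuous_on, rule ballI)
  fix t assume "t \<in> arcsin_range"
  then show "isCont (\<lambda>t. a_series c (sin t)) t"
    using isCont_a_series[OF assms abs_sin_less_1_arcsin_range] by (intro isCont_o2[OF isCont_sin])
qed

lemma continuous_on_a_series_sin_over_sin:
  assumes "1 \<le> conv_radius c" "c 0 = 0"
  shows "continuous_on arcsin_range (\<lambda>t. a_series c (sin t) / sin t)"
proof (rule continuous_on_compose2[OF continuous_on_a_series_over_x[OF assms] continuous_on_sin[OF continuous_on_id]])
  show "sin ` arcsin_range \<subseteq> {-1<..<1}"
    using abs_sin_less_1_arcsin_range by (auto simp: abs_less_iff)
qed

section \<open>Oriented integrals and change of variables\<close>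

lemma oint_fundamental_theorem:
  fixes K k :: "real \<Rightarrow> real"
  assumes cont: "continuous_on (closed_segment 0 y) K"
    and deriv: "\<And>t. t \<in> closed_segment 0 y \<Longrightarrow> t \<noteq> 0 \<Longrightarrow> (K has_real_derivative k t) (at t)"
  shows "k integrable_on closed_segment 0 y \<and> oint 0 y k = K y - K 0"
proof (cases "0 \<le> y")
  case True
  have "(k has_integral (K y - K 0)) {0..y}"
    by (rule fundamental_theorem_of_calculus_strong[of "{0}"])
       (use True cont deriv in \<open>auto simp: closed_segment_eq_real_ivl
          simp flip: has_real_derivative_iff_has_vector_derivative\<close>)
  then show ?thesis
    using True by (auto simp: oint_def closed_segment_eq_real_ivl integral_unique)
next
  case False
  have "(k has_integral (K 0 - K y)) {y..0}"
    by (rule fundamental_theorem_of_calculus_strong[of "{0}"])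
       (use False cont deriv in \<open>auto simp: closed_segment_eq_real_ivl
          simp flip: has_real_derivative_iff_has_vector_derivative\<close>)
  then show ?thesis
    using False by (auto simp: oint_def closed_segment_eq_real_ivl integral_unique)
qed

lemma oint_diff:
  assumes "f integrable_on closed_segment 0 y" "g integrable_on closed_segment 0 y"
  shows "oint 0 y (\<lambda>t. f t - g t) = oint 0 y f - oint 0 y g"
  using assms by (auto simp: oint_def closed_segment_eq_real_ivl integral_diff split: if_splits)

text \<open>\<open>\<psi> = id\<close> on \<open>arcsin_range\<close> gives \<open>lam\<close> and \<open>\<psi> = arcsin\<close> on \<open>(-1, 1)\<close> gives \<open>Lam\<close>.\<close>

locale substitution =
  fixes P Q :: "(real \<Rightarrow> real) \<Rightarrow> real \<Rightarrow> real" and \<psi> \<psi>' :: "real \<Rightarrow> real" and D :: "real set"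
  assumes convex_D: "convex D" and zero_in_D: "0 \<in> D"
    and \<psi>_range: "\<And>u. u \<in> D \<Longrightarrow> \<psi> u \<in> arcsin_range"
    and \<psi>_eq_0_iff: "\<And>u. u \<in> D \<Longrightarrow> \<psi> u = 0 \<longleftrightarrow> u = 0"
    and \<psi>_deriv: "\<And>u. u \<in> D \<Longrightarrow> (\<psi> has_real_derivative \<psi>' u) (at u)"
    and continuous_\<psi>': "continuous_on D \<psi>'"
    and P_eq: "\<And>f u. u \<in> D \<Longrightarrow> P f u = f (\<psi> u) * \<psi>' u"
    and Q_eq: "\<And>F u. u \<in> D \<Longrightarrow> Q F u = F (\<psi> u)"
begin

lemma continuous_on_comp_\<psi>:
  assumes "continuous_on arcsin_range H"
  shows "continuous_on D (\<lambda>u. H (\<psi> u))"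
proof -
  have "continuous_on D \<psi>"
    using \<psi>_deriv by (meson DERIV_isCont continuous_at_imp_continuous_on)
  then show ?thesis
    using continuous_on_compose2[OF assms] \<psi>_range by blast
qed

lemma oint_comp_\<psi>:
  assumes "continuous_on arcsin_range H"
    and "\<And>t. t \<in> arcsin_range \<Longrightarrow> t \<noteq> 0 \<Longrightarrow> (H has_real_derivative h t) (at t)"
    and "\<And>u. u \<in> D \<Longrightarrow> k u = h (\<psi> u) * \<psi>' u" and "u \<in> D"
  shows "k integrable_on closed_segment 0 u \<and> oint 0 u k = H (\<psi> u) - H 0"
proof -
  have segment: "closed_segment 0 u \<subseteq> D"
    using closed_segment_subset[OF zero_in_D \<open>u \<in> D\<close> convex_D] .
  have "k integrable_on closed_segment 0 u \<and> oint 0 u k = H (\<psi> u) - H (\<psi> 0)"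
  proof (rule oint_fundamental_theorem)
    show "continuous_on (closed_segment 0 u) (\<lambda>u. H (\<psi> u))"
      using continuous_on_subset[OF continuous_on_comp_\<psi>[OF assms(1)] segment] .
    fix t assume "t \<in> closed_segment 0 u" "t \<noteq> 0"
    then have t: "t \<in> D" "\<psi> t \<in> arcsin_range" "\<psi> t \<noteq> 0"
      using segment \<psi>_range \<psi>_eq_0_iff by auto
    show "((\<lambda>u. H (\<psi> u)) has_real_derivative k t) (at t)"
      using DERIV_chain2[OF assms(2)[OF t(2,3)] \<psi>_deriv[OF t(1)]] assms(3)[OF t(1)] by simp
  qed
  then show ?thesis
    using \<psi>_eq_0_iff[OF zero_in_D] by simp
qed

lemma form_op_eq_antiderivative:
  assumes "continuous_on arcsin_range H" "H 0 = 0"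
    and "\<And>t. t \<in> arcsin_range \<Longrightarrow> t \<noteq> 0 \<Longrightarrow> (H has_real_derivative f t * g t) (at t)"
    and "\<And>u. u \<in> D \<Longrightarrow> G u = g (\<psi> u)" and "u \<in> D"
  shows "form_op (P f) G u = H (\<psi> u)"
  using oint_comp_\<psi>[of H "\<lambda>t. f t * g t" "\<lambda>t. P f t * G t" u] assms
  by (simp add: form_op_def P_eq)

lemma form_op_eq_diff_antiderivative:
  assumes "continuous_on arcsin_range K" "K 0 = 0"
    and "\<And>t. t \<in> arcsin_range \<Longrightarrow> t \<noteq> 0 \<Longrightarrow> (K has_real_derivative a t * g t - b t * h t) (at t)"
    and "continuous_on arcsin_range (\<lambda>t. a t * g t)"
    and "\<And>u. u \<in> D \<Longrightarrow> G u = g (\<psi> u)" "\<And>u. u \<in> D \<Longrightarrow> H u = h (\<psi> u)" and "u \<in> D"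
  shows "form_op (P b) H u = form_op (P a) G u - K (\<psi> u)"
proof -
  have segment: "closed_segment 0 u \<subseteq> D"
    using closed_segment_subset[OF zero_in_D \<open>u \<in> D\<close> convex_D] .
  have "continuous_on D (\<lambda>t. a (\<psi> t) * g (\<psi> t) * \<psi>' t)"
    using continuous_on_mult[OF continuous_on_comp_\<psi>[OF assms(4)] continuous_\<psi>'] .
  then have "continuous_on (closed_segment 0 u) (\<lambda>t. a (\<psi> t) * g (\<psi> t) * \<psi>' t)"
    using segment by (rule continuous_on_subset)
  then have "continuous_on (closed_segment 0 u) (\<lambda>t. P a t * G t)"
    by (rule continuous_on_eq) (use segment assms(5) in \<open>auto simp: P_eq\<close>)
  then have int1: "(\<lambda>t. P a t * G t) integrable_on closed_segment 0 u"
    by (simp add: integrable_continuous_closed_segment)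
  have int2: "(\<lambda>t. P a t * G t - P b t * H t) integrable_on closed_segment 0 u"
   and val2: "oint 0 u (\<lambda>t. P a t * G t - P b t * H t) = K (\<psi> u) - K 0"
    using oint_comp_\<psi>[of K "\<lambda>t. a t * g t - b t * h t"] assms
    by (simp_all add: P_eq algebra_simps)
  have "form_op (P b) H u = oint 0 u (\<lambda>t. P a t * G t - (P a t * G t - P b t * H t))"
    by (simp add: form_op_def)
  also have "\<dots> = form_op (P a) G u - K (\<psi> u)"
    using oint_diff[OF int1 int2] val2 assms(2) by (simp add: form_op_def)
  finally show ?thesis .
qed

lemma fun_op_eq: "u \<in> D \<Longrightarrow> fun_op (Q F) G u = F (\<psi> u) * G u"
  by (simp add: fun_op_def Q_eq)

end

lemma substitution_lam: "substitution id id id (\<lambda>_. 1) arcsin_range"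
  by unfold_locales (auto simp: arcsin_range_def id_def)

lemma substitution_Lam:
  "substitution (\<lambda>f t. f (arcsin t) / sqrt (1 - t\<^sup>2)) (\<lambda>F t. F (arcsin t))
     arcsin (\<lambda>t. 1 / sqrt (1 - t\<^sup>2)) {-1<..<1}"
proof unfold_locales
  fix u :: real
  assume u: "u \<in> {-1<..<1}"
  then show "arcsin u \<in> arcsin_range"
    using arcsin_lt_bounded[of u] by (auto simp: arcsin_range_def)
  show "arcsin u = 0 \<longleftrightarrow> u = 0"
    using u by (metis arcsin_0 sin_arcsin sin_zero greaterThanLessThan_iff less_eq_real_def)
  show "(arcsin has_real_derivative 1 / sqrt (1 - u\<^sup>2)) (at u)"
    using DERIV_arcsin[of u] u by (simp add: inverse_eq_divide)
next
  have "sqrt (1 - t\<^sup>2) \<noteq> 0" if "t \<in> {-1<..<1}" for t :: real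
    using that abs_square_eq_1[of t] by auto
  then show "continuous_on {-1<..<1} (\<lambda>t::real. 1 / sqrt (1 - t\<^sup>2))"
    by (auto intro!: continuous_intros)
qed auto

section \<open>The operators \<open>\<lambda>\<^sub>l\<^sub>,\<^sub>s\<close> on coefficient sequences\<close>

definition partial_sums :: "(nat \<Rightarrow> real) \<Rightarrow> nat \<Rightarrow> real" where
  "partial_sums c m = (\<Sum>k<m. c k)"

definition lam_coeffs :: "lkind \<Rightarrow> nat \<Rightarrow> (nat \<Rightarrow> real) \<Rightarrow> nat \<Rightarrow> real" where
  "lam_coeffs l s c m = partial_sums c m / l_val l m ^ s"

lemma partial_sums_0 [simp]: "partial_sums c 0 = 0"
  by (simp add: partial_sums_def)

lemma partial_sums_Suc: "partial_sums c (Suc m) = partial_sums c m + c m"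
  by (simp add: partial_sums_def)

lemma lam_coeffs_0 [simp]: "lam_coeffs l s c 0 = 0"
  by (simp add: lam_coeffs_def)

lemma lam_coeffs_exp_0: "lam_coeffs l 0 c = partial_sums c"
  by (simp add: fun_eq_iff lam_coeffs_def)

lemma l_val_ge_1: "0 < m \<Longrightarrow> 1 \<le> l_val l m"
  by (cases l) (auto simp: l_val_def)

lemma conv_radius_partial_sums_ge_1: "1 \<le> conv_radius c \<Longrightarrow> 1 \<le> conv_radius (partial_sums c)"
  using conv_radius_partial_sums[of c] by (simp add: partial_sums_def min_def split: if_splits)

lemma conv_radius_lam_coeffs:
  assumes "1 \<le> conv_radius c"
  shows "1 \<le> conv_radius (lam_coeffs l s c)"
proof -
  have "\<bar>lam_coeffs l s c m\<bar> \<le> \<bar>partial_sums c m\<bar>" for m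
  proof (cases "m = 0")
    case False
    then have "1 \<le> l_val l m ^ s"
      using l_val_ge_1 one_le_power by blast
    then have "\<bar>partial_sums c m\<bar> / l_val l m ^ s \<le> \<bar>partial_sums c m\<bar> / 1"
      by (intro divide_left_mono) auto
    then show ?thesis
      using \<open>1 \<le> l_val l m ^ s\<close> by (simp add: lam_coeffs_def abs_divide)
  qed simp
  then have "conv_radius (partial_sums c) \<le> conv_radius (lam_coeffs l s c)"
    by (intro conv_radius_mono) simp
  with conv_radius_partial_sums_ge_1[OF assms] show ?thesis
    by simp
qed

lemma l_val_mult_lam_coeffs: "l_val l m * lam_coeffs l (Suc s) c m = lam_coeffs l s c m"
proof (cases "m = 0")
  case False
  then have "l_val l m \<noteq> 0"
    using l_val_ge_1[of m l] by simp
  then show ?thesis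
    by (simp add: lam_coeffs_def)
qed simp

lemma euler_coeffs_lam_coeffs_even:
  "euler_coeffs (lam_coeffs L_even (Suc s) c) = lam_coeffs L_even s c"
  using l_val_mult_lam_coeffs[of L_even _ s c] by (simp add: fun_eq_iff euler_coeffs_def l_val_def)

lemma lam_coeffs_odd_Suc:
  "lam_coeffs L_odd (Suc s) c m + euler_coeffs (lam_coeffs L_odd (Suc s) c) m = lam_coeffs L_odd s c m"
  using l_val_mult_lam_coeffs[of L_odd m s c] by (simp add: euler_coeffs_def l_val_def algebra_simps)

lemma lam_coeffs_oddm_Suc:
  "euler_coeffs (lam_coeffs L_oddm (Suc s) c) m - lam_coeffs L_oddm (Suc s) c m = lam_coeffs L_oddm s c m"
  using l_val_mult_lam_coeffs[of L_oddm m s c] by (simp add: euler_coeffs_def l_val_def algebra_simps)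

lemma sec_tan_antiderivative:
  assumes c: "1 \<le> conv_radius c" and t: "t \<in> arcsin_range" "t \<noteq> 0"
  shows "((\<lambda>t. sin t * tan t * a_series c (sin t) - cos t * a_series (partial_sums c) (sin t))
           has_real_derivative sec_f t * tan t * a_series c (sin t)) (at t)"
proof -
  define s where "s = sin t"
  define A E S ES where "A = a_series c s" and "E = a_series (euler_coeffs c) s"
    and "S = a_series (partial_sums c) s" and "ES = a_series (euler_coeffs (partial_sums c)) s"
  have s: "\<bar>s\<bar> < 1" "s \<noteq> 0" and co: "cos t \<noteq> 0"
    using t abs_sin_less_1_arcsin_range sin_eq_0_arcsin_range cos_gt_zero_arcsin_range
    by (auto simp: s_def intro!: less_imp_neq[symmetric])
  have cS: "1 \<le> conv_radius (partial_sums c)"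
    by (rule conv_radius_partial_sums_ge_1[OF c])
  \<comment> \<open>\<open>(2k+1) S\<^sub>k\<^sub>+\<^sub>1 = c\<^sub>k + 2k c\<^sub>k + S\<^sub>k + 2k S\<^sub>k\<close> for the partial sums \<open>S\<close>, then Euler's relation for \<open>S\<close>\<close>
  have "(\<lambda>k. c k * a_coef k s + euler_coeffs c k * a_coef k s + partial_sums c k * a_coef k s
          + euler_coeffs (partial_sums c) k * a_coef k s) sums (A + E + S + ES)"
    unfolding A_def E_def S_def ES_def using s c cS
    by (intro sums_add a_series_sums order_trans[OF _ conv_radius_euler_coeffs])
  then have "(\<lambda>k. deriv_coeffs (partial_sums c) k * a_coef k s) sums (A + E + S + ES)"
    by (simp add: deriv_coeffs_def euler_coeffs_def partial_sums_Suc algebra_simps)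
  then have "ES = s\<^sup>2 * (A + E + S + ES)"
    using a_series_euler_coeffs[OF cS s(1)] by (simp add: ES_def a_series_def sums_iff)
  then have "ES * (cos t)\<^sup>2 = s\<^sup>2 * (A + E + S)"
    using cos_squared_eq[of t] unfolding s_def by algebra
  then have key: "cot t * ES * cos t = s * (A + E + S)"
    using s(2) unfolding s_def by (simp add: cot_def field_simps power2_eq_square)
  have dA: "((\<lambda>t. a_series c (sin t)) has_real_derivative cot t * E) (at t)"
    unfolding E_def s_def by (rule has_real_derivative_a_series_sin[OF c t])
  have dS: "((\<lambda>t. a_series (partial_sums c) (sin t)) has_real_derivative cot t * ES) (at t)"
    unfolding ES_def s_def by (rule has_real_derivative_a_series_sin[OF cS t])
  show ?thesis
  proof (rule DERIV_cong[OF DERIV_diff[OF DERIV_mult[OF DERIV_mult[OF DERIV_sin DERIV_tan[OF co]] dA]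
                                            DERIV_mult[OF DERIV_cos dS]]])
    show "(cos t * tan t + inverse ((cos t)\<^sup>2) * sin t) * a_series c (sin t) + cot t * E * (sin t * tan t)
          - (- sin t * a_series (partial_sums c) (sin t) + cot t * ES * cos t)
          = sec_f t * tan t * a_series c (sin t)"
      unfolding key using s(2) co
      by (simp add: A_def S_def s_def [symmetric] tan_def cot_def sec_f_def field_simps power2_eq_square)
  qed
qed

lemma lam_coeffs_even_antiderivative:
  assumes "1 \<le> conv_radius c" "t \<in> arcsin_range" "t \<noteq> 0"
  shows "((\<lambda>t. a_series (lam_coeffs L_even (Suc j) c) (sin t)) has_real_derivative
           cot t * a_series (lam_coeffs L_even j c) (sin t)) (at t)"
  using has_real_derivative_a_series_sin[OF conv_radius_lam_coeffs[OF assms(1), of L_even "Suc j"] assms(2,3)]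
  by (simp add: euler_coeffs_lam_coeffs_even)

lemma lam_coeffs_odd_antiderivative:
  assumes c: "1 \<le> conv_radius c" and t: "t \<in> arcsin_range" "t \<noteq> 0"
  shows "((\<lambda>t. sin t * a_series (lam_coeffs L_odd (Suc j) c) (sin t)) has_real_derivative
           cot t * (sin t * a_series (lam_coeffs L_odd j c) (sin t))) (at t)"
proof -
  let ?c = "lam_coeffs L_odd (Suc j) c"
  have c': "1 \<le> conv_radius ?c"
    by (rule conv_radius_lam_coeffs[OF c])
  have s: "\<bar>sin t\<bar> < 1" "sin t \<noteq> 0"
    using t abs_sin_less_1_arcsin_range sin_eq_0_arcsin_range by auto
  have sum: "a_series ?c (sin t) + a_series (euler_coeffs ?c) (sin t) = a_series (lam_coeffs L_odd j c) (sin t)"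
    using a_series_add[OF c' order_trans[OF c' conv_radius_euler_coeffs] s(1)]
    by (simp add: lam_coeffs_odd_Suc)
  show ?thesis
  proof (rule DERIV_cong[OF DERIV_mult[OF DERIV_sin has_real_derivative_a_series_sin[OF c' t]]])
    have "cot t * a_series (euler_coeffs ?c) (sin t) * sin t = cos t * a_series (euler_coeffs ?c) (sin t)"
      using s(2) by (simp add: cot_def)
    then have "cos t * a_series ?c (sin t) + cot t * a_series (euler_coeffs ?c) (sin t) * sin t
        = cos t * a_series (lam_coeffs L_odd j c) (sin t)"
      by (simp flip: sum add: distrib_left)
    also have "\<dots> = cot t * (sin t * a_series (lam_coeffs L_odd j c) (sin t))"
      using s(2) by (simp add: cot_def)
    finally show "cos t * a_series ?c (sin t) + cot t * a_series (euler_coeffs ?c) (sin t) * sin t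
        = cot t * (sin t * a_series (lam_coeffs L_odd j c) (sin t))" .
  qed
qed

lemma lam_coeffs_oddm_1_antiderivative:
  assumes c: "1 \<le> conv_radius c" and t: "t \<in> arcsin_range" "t \<noteq> 0"
  shows "((\<lambda>t. a_series (lam_coeffs L_oddm 1 c) (sin t) / cos t) has_real_derivative
           tan t * sec_f t * a_series c (sin t)) (at t)"
proof -
  define s where "s = sin t"
  let ?m = "lam_coeffs L_oddm 1 c"
  have s: "\<bar>s\<bar> < 1" "s \<noteq> 0" and co: "cos t \<noteq> 0"
    using t abs_sin_less_1_arcsin_range sin_eq_0_arcsin_range cos_gt_zero_arcsin_range
    by (auto simp: s_def intro!: less_imp_neq[symmetric])
  have cm: "1 \<le> conv_radius ?m" and cS: "1 \<le> conv_radius (partial_sums c)"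
    using c by (rule conv_radius_lam_coeffs, rule conv_radius_partial_sums_ge_1)
  have "deriv_coeffs ?m = (\<lambda>k. partial_sums c k + c k)"
    using l_val_mult_lam_coeffs[of L_oddm "Suc k" 0 c for k]
    by (simp add: fun_eq_iff deriv_coeffs_def l_val_def lam_coeffs_exp_0 partial_sums_Suc algebra_simps)
  then have "a_series (euler_coeffs ?m) s = s\<^sup>2 * (a_series (partial_sums c) s + a_series c s)"
    using a_series_euler_coeffs[OF cm s(1)] a_series_add[OF cS c s(1)] by simp
  moreover have "a_series (euler_coeffs ?m) s - a_series ?m s = a_series (partial_sums c) s"
    using a_series_diff[OF order_trans[OF cm conv_radius_euler_coeffs] cm s(1)] lam_coeffs_oddm_Suc[of 0 c]
    by (simp add: lam_coeffs_exp_0)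
  ultimately have key: "(cos t)\<^sup>2 * a_series (euler_coeffs ?m) s + s\<^sup>2 * a_series ?m s = s\<^sup>2 * a_series c s"
    using sin_cos_squared_add[of t] unfolding s_def by algebra
  show ?thesis
  proof (rule DERIV_cong[OF DERIV_divide[OF has_real_derivative_a_series_sin[OF cm t] DERIV_cos co]])
    show "(cot t * a_series (euler_coeffs ?m) (sin t) * cos t - a_series ?m (sin t) * - sin t) / (cos t * cos t)
          = tan t * sec_f t * a_series c (sin t)"
      using key s(2) co unfolding s_def
      by (simp add: cot_def tan_def sec_f_def field_simps power2_eq_square)
  qed
qed

lemma lam_coeffs_oddm_antiderivative:
  assumes c: "1 \<le> conv_radius c" and t: "t \<in> arcsin_range" "t \<noteq> 0"
  shows "((\<lambda>t. a_series (lam_coeffs L_oddm (Suc j) c) (sin t) / sin t) has_real_derivative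
           cos t / (sin t)\<^sup>2 * a_series (lam_coeffs L_oddm j c) (sin t)) (at t)"
proof -
  let ?c = "lam_coeffs L_oddm (Suc j) c"
  have c': "1 \<le> conv_radius ?c"
    by (rule conv_radius_lam_coeffs[OF c])
  have s: "\<bar>sin t\<bar> < 1" "sin t \<noteq> 0"
    using t abs_sin_less_1_arcsin_range sin_eq_0_arcsin_range by auto
  have "a_series (euler_coeffs ?c) (sin t) - a_series ?c (sin t) = a_series (lam_coeffs L_oddm j c) (sin t)"
    using a_series_diff[OF order_trans[OF c' conv_radius_euler_coeffs] c' s(1)]
    by (simp add: lam_coeffs_oddm_Suc)
  then show ?thesis
    using s(2)
    by (intro DERIV_cong[OF DERIV_divide[OF has_real_derivative_a_series_sin[OF c' t] DERIV_sin s(2)]])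
      (auto simp: cot_def field_simps power2_eq_square)
qed

fun word_coeffs :: "(lkind \<times> nat) list \<Rightarrow> nat \<Rightarrow> nat \<Rightarrow> real" where
  "word_coeffs [] n = (\<lambda>m. if m = n then 1 else 0)"
| "word_coeffs ((l, s) # zs) n = lam_coeffs l s (word_coeffs zs n)"

lemma conv_radius_word_coeffs: "1 \<le> conv_radius (word_coeffs zs n)"
proof (induction zs)
  case Nil
  have "eventually (\<lambda>m. word_coeffs [] n m = 0) sequentially"
    using eventually_gt_at_top[of n] by eventually_elim simp
  then have "conv_radius (word_coeffs [] n) = \<infinity>"
    using conv_radius_cong'[of "word_coeffs [] n" "\<lambda>_. 0"] by simp
  then show ?case
    by simp
next
  case (Cons z zs)
  then show ?case
    by (cases z) (simp add: conv_radius_lam_coeffs)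
qed

lemma a_series_word_coeffs_Nil: "a_series (word_coeffs [] n) x = a_coef n x"
proof -
  have "(\<lambda>k. word_coeffs [] n k * a_coef k x) = (\<lambda>k. if k = n then a_coef k x else 0)"
    by auto
  then show ?thesis
    using sums_single[of n "\<lambda>k. a_coef k x"] by (simp add: a_series_def sums_iff)
qed

context substitution
begin

lemma iterate_form_op_cot:
  assumes "\<And>m. continuous_on arcsin_range (F m)" "\<And>m. F m 0 = 0"
    and "\<And>m t. t \<in> arcsin_range \<Longrightarrow> t \<noteq> 0 \<Longrightarrow> (F (Suc m) has_real_derivative cot t * F m t) (at t)"
    and "\<And>u. u \<in> D \<Longrightarrow> X u = F 0 (\<psi> u)" and "u \<in> D"
  shows "(form_op (P cot) ^^ n) X u = F n (\<psi> u)"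
  using \<open>u \<in> D\<close>
proof (induction n arbitrary: u)
  case 0
  then show ?case
    using assms(4) by simp
next
  case (Suc n)
  have "form_op (P cot) ((form_op (P cot) ^^ n) X) u = F (Suc n) (\<psi> u)"
    by (rule form_op_eq_antiderivative[where g = "F n"]) (use assms Suc in auto)
  then show ?case
    by simp
qed

lemma form_op_sec_tan:
  assumes c: "1 \<le> conv_radius c" and G: "\<And>u. u \<in> D \<Longrightarrow> G u = a_series c (sin (\<psi> u))" and "u \<in> D"
  shows "form_op (P (\<lambda>t. sec_f t * tan t)) G u
    = sin (\<psi> u) * tan (\<psi> u) * a_series c (sin (\<psi> u)) - cos (\<psi> u) * a_series (partial_sums c) (sin (\<psi> u))"
proof (rule form_op_eq_antiderivative[where g = "\<lambda>t. a_series c (sin t)", OF _ _ _ G \<open>u \<in> D\<close>])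
  show "continuous_on arcsin_range
      (\<lambda>t. sin t * tan t * a_series c (sin t) - cos t * a_series (partial_sums c) (sin t))"
    using continuous_on_a_series_sin[OF c] continuous_on_a_series_sin[OF conv_radius_partial_sums_ge_1[OF c]]
      cos_gt_zero_arcsin_range by (auto intro!: continuous_intros simp: less_imp_neq[symmetric])
qed (use sec_tan_antiderivative[OF c] in \<open>auto simp: a_series_at_0\<close>)

lemma lam_gen_even:
  assumes c: "1 \<le> conv_radius c" and s: "1 \<le> s"
    and G: "\<And>u. u \<in> D \<Longrightarrow> G u = a_series c (sin (\<psi> u))" and u: "u \<in> D"
  shows "lam_gen P Q L_even s G u = a_series (lam_coeffs L_even s c) (sin (\<psi> u))"
proof -
  define F where "F = (\<lambda>m t. a_series (lam_coeffs L_even (Suc m) c) (sin t))"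
  have cont: "continuous_on arcsin_range (F m)" for m
    unfolding F_def by (rule continuous_on_a_series_sin[OF conv_radius_lam_coeffs[OF c]])
  have start: "form_op (P tan) G v - form_op (P csc_f) (form_op (P (\<lambda>t. sec_f t * tan t)) G) v = F 0 (\<psi> v)"
    if v: "v \<in> D" for v
  proof -
    have "form_op (P csc_f) (form_op (P (\<lambda>t. sec_f t * tan t)) G) v = form_op (P tan) G v - F 0 (\<psi> v)"
    proof (rule form_op_eq_diff_antiderivative[where a = tan and g = "\<lambda>t. a_series c (sin t)"
        and h = "\<lambda>t. sin t * tan t * a_series c (sin t) - cos t * a_series (partial_sums c) (sin t)"])
      show "F 0 0 = 0"
        by (simp add: F_def a_series_at_0)
      show "continuous_on arcsin_range (\<lambda>t. tan t * a_series c (sin t))"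
        using continuous_on_a_series_sin[OF c] cos_gt_zero_arcsin_range
        by (auto intro!: continuous_intros simp: less_imp_neq[symmetric])
      fix t assume t: "t \<in> arcsin_range" "t \<noteq> 0"
      then have "sin t \<noteq> 0"
        using sin_eq_0_arcsin_range by blast
      then show "(F 0 has_real_derivative tan t * a_series c (sin t) - csc_f t *
          (sin t * tan t * a_series c (sin t) - cos t * a_series (partial_sums c) (sin t))) (at t)"
        using lam_coeffs_even_antiderivative[OF c t, of 0]
        by (simp add: F_def lam_coeffs_exp_0 cot_def csc_f_def field_simps)
    qed (use cont G form_op_sec_tan[OF c G] v in auto)
    then show ?thesis
      by simp
  qed
  have "(form_op (P cot) ^^ (s - 1))
      (\<lambda>v. form_op (P tan) G v - form_op (P csc_f) (form_op (P (\<lambda>t. sec_f t * tan t)) G) v) u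
      = F (s - 1) (\<psi> u)"
  proof (rule iterate_form_op_cot[OF cont])
    show "F m 0 = 0" for m
      by (simp add: F_def a_series_at_0)
    show "(F (Suc m) has_real_derivative cot t * F m t) (at t)" if "t \<in> arcsin_range" "t \<noteq> 0" for m t
      unfolding F_def by (rule lam_coeffs_even_antiderivative[OF c that])
  qed (use start u in auto)
  then show ?thesis
    using s by (simp add: lam_gen_def Let_def F_def)
qed

lemma lam_gen_odd:
  assumes c: "1 \<le> conv_radius c" and s: "1 \<le> s"
    and G: "\<And>u. u \<in> D \<Longrightarrow> G u = a_series c (sin (\<psi> u))" and u: "u \<in> D"
  shows "lam_gen P Q L_odd s G u = a_series (lam_coeffs L_odd s c) (sin (\<psi> u))"
proof -
  define F where "F = (\<lambda>m t. sin t * a_series (lam_coeffs L_odd (Suc m) c) (sin t))"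
  have cont: "continuous_on arcsin_range (F m)" for m
    unfolding F_def using continuous_on_a_series_sin[OF conv_radius_lam_coeffs[OF c]]
    by (auto intro!: continuous_intros)
  have start: "form_op (P (\<lambda>t. sin t * tan t)) G v
      - form_op (P (\<lambda>t. 1)) (form_op (P (\<lambda>t. sec_f t * tan t)) G) v = F 0 (\<psi> v)"
    if v: "v \<in> D" for v
  proof -
    have "form_op (P (\<lambda>t. 1)) (form_op (P (\<lambda>t. sec_f t * tan t)) G) v
        = form_op (P (\<lambda>t. sin t * tan t)) G v - F 0 (\<psi> v)"
    proof (rule form_op_eq_diff_antiderivative[where a = "\<lambda>t. sin t * tan t" and g = "\<lambda>t. a_series c (sin t)"
        and h = "\<lambda>t. sin t * tan t * a_series c (sin t) - cos t * a_series (partial_sums c) (sin t)"])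
      show "F 0 0 = 0"
        by (simp add: F_def)
      show "continuous_on arcsin_range (\<lambda>t. sin t * tan t * a_series c (sin t))"
        using continuous_on_a_series_sin[OF c] cos_gt_zero_arcsin_range
        by (auto intro!: continuous_intros simp: less_imp_neq[symmetric])
      fix t assume t: "t \<in> arcsin_range" "t \<noteq> 0"
      then have "sin t \<noteq> 0"
        using sin_eq_0_arcsin_range by blast
      then show "(F 0 has_real_derivative sin t * tan t * a_series c (sin t) - 1 *
          (sin t * tan t * a_series c (sin t) - cos t * a_series (partial_sums c) (sin t))) (at t)"
        using lam_coeffs_odd_antiderivative[OF c t, of 0]
        by (simp add: F_def lam_coeffs_exp_0 cot_def)
    qed (use cont G form_op_sec_tan[OF c G] v in auto)
    then show ?thesis
      by simp
  qed
  have "(form_op (P cot) ^^ (s - 1)) (\<lambda>v. form_op (P (\<lambda>t. sin t * tan t)) G v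
      - form_op (P (\<lambda>t. 1)) (form_op (P (\<lambda>t. sec_f t * tan t)) G) v) u = F (s - 1) (\<psi> u)"
  proof (rule iterate_form_op_cot[OF cont])
    show "F m 0 = 0" for m
      by (simp add: F_def)
    show "(F (Suc m) has_real_derivative cot t * F m t) (at t)" if "t \<in> arcsin_range" "t \<noteq> 0" for m t
      unfolding F_def by (rule lam_coeffs_odd_antiderivative[OF c that])
  qed (use start u in auto)
  moreover have "csc_f (\<psi> u) * F (s - 1) (\<psi> u) = a_series (lam_coeffs L_odd s c) (sin (\<psi> u))"
  proof (cases "\<psi> u = 0")
    case True
    \<comment> \<open>the junk value \<open>csc_f 0 = 0\<close> is harmless: the series vanishes at 0\<close>
    then show ?thesis
      by (simp add: csc_f_def a_series_at_0)
  next
    case False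
    then have "sin (\<psi> u) \<noteq> 0"
      using u \<psi>_range sin_eq_0_arcsin_range by blast
    then show ?thesis
      using s by (simp add: F_def csc_f_def)
  qed
  ultimately show ?thesis
    using u by (simp add: lam_gen_def Let_def fun_op_eq)
qed

lemma lam_gen_oddm:
  assumes c: "1 \<le> conv_radius c" and s: "1 \<le> s"
    and G: "\<And>u. u \<in> D \<Longrightarrow> G u = a_series c (sin (\<psi> u))" and u: "u \<in> D"
  shows "lam_gen P Q L_oddm s G u = a_series (lam_coeffs L_oddm s c) (sin (\<psi> u))"
proof -
  define M where "M = (\<lambda>t. a_series (lam_coeffs L_oddm 1 c) (sin t) / cos t)"
  have sec_tan: "form_op (P (\<lambda>t. tan t * sec_f t)) G v = M (\<psi> v)" if "v \<in> D" for v
  proof (rule form_op_eq_antiderivative[where g = "\<lambda>t. a_series c (sin t)", OF _ _ _ G that])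
    show "continuous_on arcsin_range M"
      unfolding M_def using continuous_on_a_series_sin[OF conv_radius_lam_coeffs[OF c]] cos_gt_zero_arcsin_range
      by (auto intro!: continuous_intros simp: less_imp_neq[symmetric])
  qed (use lam_coeffs_oddm_1_antiderivative[OF c] in \<open>auto simp: M_def a_series_at_0\<close>)
  have cos_pos: "0 < cos (\<psi> u)"
    using u \<psi>_range cos_gt_zero_arcsin_range by blast
  show ?thesis
  proof (cases "s = 1")
    case True
    then show ?thesis
      using sec_tan[OF u] cos_pos u by (simp add: lam_gen_def Let_def fun_op_eq M_def)
  next
    case False
    define F where "F = (\<lambda>m t. a_series (lam_coeffs L_oddm (Suc (Suc m)) c) (sin t) / sin t)"
    have cont: "continuous_on arcsin_range (F m)" for m
      unfolding F_def by (rule continuous_on_a_series_sin_over_sin[OF conv_radius_lam_coeffs[OF c] lam_coeffs_0])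
    have start: "form_op (P (\<lambda>t. 1 / (tan t)\<^sup>2)) (form_op (P (\<lambda>t. tan t * sec_f t)) G) v = F 0 (\<psi> v)"
      if v: "v \<in> D" for v
    proof (rule form_op_eq_antiderivative[where g = M, OF cont])
      fix t assume t: "t \<in> arcsin_range" "t \<noteq> 0"
      then have "sin t \<noteq> 0" "cos t \<noteq> 0"
        using sin_eq_0_arcsin_range cos_gt_zero_arcsin_range by (auto intro!: less_imp_neq[symmetric])
      then show "(F 0 has_real_derivative 1 / (tan t)\<^sup>2 * M t) (at t)"
        using lam_coeffs_oddm_antiderivative[OF c t, of 1]
        by (simp add: F_def M_def tan_def field_simps power2_eq_square)
    qed (use sec_tan v in \<open>auto simp: F_def\<close>)
    have "(form_op (P cot) ^^ (s - 2))
        (form_op (P (\<lambda>t. 1 / (tan t)\<^sup>2)) (form_op (P (\<lambda>t. tan t * sec_f t)) G)) u = F (s - 2) (\<psi> u)"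
    proof (rule iterate_form_op_cot[OF cont])
      show "F m 0 = 0" for m
        by (simp add: F_def)
      fix m t assume t: "t \<in> arcsin_range" "t \<noteq> 0"
      then have "sin t \<noteq> 0"
        using sin_eq_0_arcsin_range by blast
      then show "(F (Suc m) has_real_derivative cot t * F m t) (at t)"
        using lam_coeffs_oddm_antiderivative[OF c t, of "Suc (Suc m)"]
        by (simp add: F_def cot_def field_simps power2_eq_square)
    qed (use start u in auto)
    moreover have "sin (\<psi> u) * F (s - 2) (\<psi> u) = a_series (lam_coeffs L_oddm s c) (sin (\<psi> u))"
    proof (cases "\<psi> u = 0")
      case True
      then show ?thesis
        by (simp add: a_series_at_0)
    next
      case False
      then have "sin (\<psi> u) \<noteq> 0"
        using u \<psi>_range sin_eq_0_arcsin_range by blast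
      moreover have "Suc (Suc (s - 2)) = s"
        using s \<open>s \<noteq> 1\<close> by simp
      ultimately show ?thesis
        by (simp add: F_def)
    qed
    ultimately show ?thesis
      using False u by (simp add: lam_gen_def Let_def fun_op_eq)
  qed
qed

lemma lam_gen_eq_a_series:
  assumes "1 \<le> conv_radius c" "1 \<le> s"
    and "\<And>u. u \<in> D \<Longrightarrow> G u = a_series c (sin (\<psi> u))" and "u \<in> D"
  shows "lam_gen P Q l s G u = a_series (lam_coeffs l s c) (sin (\<psi> u))"
  using lam_gen_even[OF assms] lam_gen_odd[OF assms] lam_gen_oddm[OF assms] by (cases l) auto


lemma foldr_lam_gen_eq_a_series:
  assumes "\<forall>z\<in>set zs. 1 \<le> snd z" and "\<And>u. u \<in> D \<Longrightarrow> h u = a_coef n (sin (\<psi> u))" and "u \<in> D"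
  shows "foldr (\<lambda>(l, s) g. lam_gen P Q l s g) zs h u = a_series (word_coeffs zs n) (sin (\<psi> u))"
  using assms(1,3)
proof (induction zs arbitrary: u)
  case Nil
  then show ?case
    using assms(2) a_series_word_coeffs_Nil[of n] by simp
next
  case (Cons z zs)
  obtain l s where z: "z = (l, s)"
    by (cases z)
  have "lam_gen P Q l s (foldr (\<lambda>(l, s) g. lam_gen P Q l s g) zs h) u
      = a_series (lam_coeffs l s (word_coeffs zs n)) (sin (\<psi> u))"
    by (rule lam_gen_eq_a_series[OF conv_radius_word_coeffs]) (use Cons z in auto)
  then show ?case
    by (simp add: z)
qed

end

section \<open>Sums over decreasing tuples\<close>

lemma has_sum_UNION_nonneg:
  fixes f :: "'a \<Rightarrow> real"
  assumes "\<And>x. x \<in> A \<Longrightarrow> (f has_sum g x) (B x)" and "(g has_sum S) A"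
    and "\<And>x y. x \<in> A \<Longrightarrow> y \<in> B x \<Longrightarrow> 0 \<le> f y" and "disjoint_family_on B A"
  shows "(f has_sum S) (\<Union>x\<in>A. B x)"
proof -
  have "f summable_on (\<Union>x\<in>A. B x)"
    using assms has_sum_imp_summable by (intro summable_on_UnionI[where g = g])
  then obtain T where T: "(f has_sum T) (\<Union>x\<in>A. B x)"
    by (auto simp: summable_on_def)
  have "inj_on snd (Sigma A B)"
    using assms(4) by (force simp: disjoint_family_on_def inj_on_def)
  moreover have "snd ` Sigma A B = (\<Union>x\<in>A. B x)"
    by force
  ultimately have "((f \<circ> snd) has_sum T) (Sigma A B)"
    using has_sum_reindex T by metis
  then have "(g has_sum T) A"
    by (rule has_sum_SigmaD) (use assms(1) in auto)
  with T assms(2) show ?thesis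
    using has_sum_unique by blast
qed

lemma sorted_wrt_greater_le_hd: "sorted_wrt (>) xs \<Longrightarrow> x \<in> set xs \<Longrightarrow> x \<le> hd (xs :: nat list)"
  by (cases xs) auto

lemma mem_dec_tuples_iff: "ns \<in> dec_tuples d n \<longleftrightarrow> length ns = d \<and> sorted_wrt (>) (ns @ [n])"
  by (auto simp: dec_tuples_def sorted_wrt_append)

text \<open>\<open>hd (ns @ [n])\<close> is \<open>n\<^sub>1\<close>, or \<open>n\<close> for the empty tuple.\<close>

definition dec_tuples_from :: "nat \<Rightarrow> nat \<Rightarrow> nat \<Rightarrow> nat list set" where
  "dec_tuples_from d n m = {ns \<in> dec_tuples d n. hd (ns @ [n]) = m}"

lemma dec_tuples_from_0: "dec_tuples_from 0 n m = (if m = n then {[]} else {})"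
  by (auto simp: dec_tuples_from_def dec_tuples_def)

lemma dec_tuples_from_disjoint: "i \<noteq> j \<Longrightarrow> dec_tuples_from d n i \<inter> dec_tuples_from d n j = {}"
  by (auto simp: dec_tuples_from_def)

lemma dec_tuples_from_Suc: "dec_tuples_from (Suc d) n m = (#) m ` (\<Union>j<m. dec_tuples_from d n j)"
proof (intro set_eqI iffI)
  fix ns
  assume "ns \<in> dec_tuples_from (Suc d) n m"
  then obtain ns' where ns: "ns = m # ns'" and len: "length ns' = d"
    and sorted: "sorted_wrt (>) (m # ns' @ [n])"
    by (cases ns) (auto simp: dec_tuples_from_def mem_dec_tuples_iff simp del: sorted_wrt.simps)
  then have "hd (ns' @ [n]) < m" "sorted_wrt (>) (ns' @ [n])"
    using hd_in_set[of "ns' @ [n]"] by auto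
  then show "ns \<in> (#) m ` (\<Union>j<m. dec_tuples_from d n j)"
    using ns len by (auto simp: dec_tuples_from_def mem_dec_tuples_iff)
next
  fix ns
  assume "ns \<in> (#) m ` (\<Union>j<m. dec_tuples_from d n j)"
  then obtain ns' where ns: "ns = m # ns'" and len: "length ns' = d"
    and sorted: "sorted_wrt (>) (ns' @ [n])" and hd: "hd (ns' @ [n]) < m"
    by (auto simp: dec_tuples_from_def mem_dec_tuples_iff)
  have "\<forall>x\<in>set (ns' @ [n]). x < m"
    using sorted_wrt_greater_le_hd[OF sorted] hd by fastforce
  then show "ns \<in> dec_tuples_from (Suc d) n m"
    using ns len sorted by (simp add: dec_tuples_from_def mem_dec_tuples_iff)
qed

lemma finite_dec_tuples_from: "finite (dec_tuples_from d n m)"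
  by (induction d arbitrary: m) (simp_all add: dec_tuples_from_0 dec_tuples_from_Suc)

definition tuple_weight :: "(lkind \<times> nat) list \<Rightarrow> nat list \<Rightarrow> real" where
  "tuple_weight zs ns = (\<Prod>i<length zs. l_val (fst (zs ! i)) (ns ! i) ^ snd (zs ! i))"

lemma tuple_weight_Cons: "tuple_weight ((l, s) # zs) (m # ns) = l_val l m ^ s * tuple_weight zs ns"
  unfolding tuple_weight_def length_Cons prod.lessThan_Suc_shift by simp

lemma tuple_weight_pos:
  assumes "ns \<in> dec_tuples (length zs) n"
  shows "0 < tuple_weight zs ns"
  unfolding tuple_weight_def
proof (rule prod_pos)
  fix i assume "i \<in> {..<length zs}"
  then have "ns ! i \<in> set ns"
    using assms by (intro nth_mem) (simp add: dec_tuples_def)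
  then have "0 < ns ! i"
    using assms by (auto simp: dec_tuples_def)
  then show "0 < l_val (fst (zs ! i)) (ns ! i) ^ snd (zs ! i)"
    using l_val_ge_1 by (simp add: order_less_le_trans[OF zero_less_one])
qed

lemma sum_dec_tuples_from:
  "(\<Sum>ns\<in>dec_tuples_from (length zs) n m. 1 / tuple_weight zs ns) = word_coeffs zs n m"
proof (induction zs arbitrary: m)
  case Nil
  then show ?case
    by (simp add: dec_tuples_from_0 tuple_weight_def)
next
  case (Cons z zs)
  obtain l s where z: "z = (l, s)"
    by (cases z)
  have "(\<Sum>ns\<in>dec_tuples_from (length (z # zs)) n m. 1 / tuple_weight (z # zs) ns)
      = (\<Sum>ns\<in>(\<Union>j<m. dec_tuples_from (length zs) n j). 1 / l_val l m ^ s * (1 / tuple_weight zs ns))"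
    by (simp add: z dec_tuples_from_Suc sum.reindex tuple_weight_Cons)
  also have "\<dots> = 1 / l_val l m ^ s * (\<Sum>j<m. \<Sum>ns\<in>dec_tuples_from (length zs) n j. 1 / tuple_weight zs ns)"
    by (subst sum.UNION_disjoint)
       (simp_all add: finite_dec_tuples_from dec_tuples_from_disjoint sum_distrib_left)
  also have "\<dots> = word_coeffs (z # zs) n m"
    by (simp add: Cons.IH z lam_coeffs_def partial_sums_def)
  finally show ?case .
qed

lemma has_sum_dec_tuples:
  assumes "zs \<noteq> []" "\<bar>x\<bar> < 1"
  shows "((\<lambda>ns. a_coef (hd ns) x / tuple_weight zs ns) has_sum a_series (word_coeffs zs n) x)
           (dec_tuples (length zs) n)"
proof -
  let ?f = "\<lambda>ns. a_coef (hd ns) x / tuple_weight zs ns" and ?T = "dec_tuples_from (length zs) n"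
  have hd_eq: "hd ns = m" if "ns \<in> ?T m" for ns m
    using that assms(1) by (cases ns) (auto simp: dec_tuples_from_def dec_tuples_def)
  have inner: "(?f has_sum (a_coef m x * word_coeffs zs n m)) (?T m)" for m
  proof -
    have "(\<Sum>ns\<in>?T m. ?f ns) = a_coef m x * word_coeffs zs n m"
      by (simp add: hd_eq sum_dec_tuples_from[symmetric] sum_distrib_left cong: sum.cong)
    then show ?thesis
      using has_sum_finite[OF finite_dec_tuples_from[of "length zs" n m], of ?f] by simp
  qed
  have weight: "0 < tuple_weight zs ns" if "ns \<in> ?T m" for ns m
    using that tuple_weight_pos by (auto simp: dec_tuples_from_def)
  have "0 \<le> word_coeffs zs n m" for m
    unfolding sum_dec_tuples_from[symmetric] using weight by (intro sum_nonneg) (simp add: less_imp_le)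
  then have "((\<lambda>m. a_coef m x * word_coeffs zs n m) has_sum a_series (word_coeffs zs n) x) UNIV"
    using a_series_sums[OF conv_radius_word_coeffs assms(2)]
    by (intro sums_nonneg_imp_has_sum) (simp_all add: mult.commute a_coef_nonneg)
  then have "(?f has_sum a_series (word_coeffs zs n) x) (\<Union>m. ?T m)"
    using inner weight a_coef_nonneg
    by (intro has_sum_UNION_nonneg) (auto simp: disjoint_family_on_def dec_tuples_from_def less_imp_le)
  moreover have "(\<Union>m. ?T m) = dec_tuples (length zs) n"
    by (auto simp: dec_tuples_from_def)
  ultimately show ?thesis
    by simp
qed

theorem theorem5p1:
  fixes d :: nat and ks :: "lkind list" and ss :: "nat list" and y :: real
  assumes "d \<ge> 1" and "length ks = d" and "length ss = d"
    and "\<forall>s\<in>set ss. s \<ge> 1"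
    and "\<forall>i\<in>{1..<d}. ks ! i \<in> {L_even, L_odd}"
    and "- (pi / 2) < y" and "y < pi / 2"
  shows "(\<forall>n::nat. (summand ks ss (sin y) has_sum
            word_val lam ks ss (\<lambda>t. a_coef n (sin t)) y) (dec_tuples d n)) \<and>
         (\<forall>n::nat. \<forall>x::real. -1 < x \<longrightarrow> x < 1 \<longrightarrow>
            (summand ks ss x has_sum word_val Lam ks ss (\<lambda>t. a_coef n t) x) (dec_tuples d n))"
proof -
  define zs where "zs = zip ks ss"
  have zs: "length zs = d" "zs \<noteq> []" "\<forall>z\<in>set zs. 1 \<le> snd z"
    using assms(1-4) by (auto simp: zs_def dest: set_zip_rightD)
  have summand: "summand ks ss x = (\<lambda>ns. a_coef (hd ns) x / tuple_weight zs ns)" for x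
    using assms(2,3) by (simp add: fun_eq_iff summand_def tuple_weight_def zs_def)
  have "word_val lam ks ss (\<lambda>t. a_coef n (sin t)) y = a_series (word_coeffs zs n) (sin y)" for n
    using substitution.foldr_lam_gen_eq_a_series[OF substitution_lam zs(3), of "\<lambda>t. a_coef n (sin t)" n y]
      assms(6,7) by (simp add: word_val_def lam_def zs_def arcsin_range_def)
  moreover have "word_val Lam ks ss (\<lambda>t. a_coef n t) x = a_series (word_coeffs zs n) x"
    if "-1 < x" "x < 1" for n x
    using substitution.foldr_lam_gen_eq_a_series[OF substitution_Lam zs(3), of "\<lambda>t. a_coef n t" n x]
      that by (simp add: word_val_def Lam_def zs_def)
  moreover have "\<bar>sin y\<bar> < 1"
    using assms(6,7) by (intro abs_sin_less_1_arcsin_range) (simp add: arcsin_range_def)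
  ultimately show ?thesis
    using has_sum_dec_tuples[OF zs(2)] zs(1) by (auto simp: summand)
qed

end
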